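(* For the modular data of the quantum double of $S_3$, each of the trace one modular invariants $Z_{25},Z_{52},Z_{34},Z_{43}$ has, up to equivalence, exactly one matching nimrep.
   Context: Primaries $0,\dots,7$, all self-conjugate, with $S=\frac16\begin{pmatrix}1&1&2&2&2&2&3&3\\1&1&2&2&2&2&-3&-3\\2&2&4&-2&-2&-2&0&0\\2&2&-2&4&-2&-2&0&0\\2&2&-2&-2&-2&4&0&0\\2&2&-2&-2&4&-2&0&0\\3&-3&0&0&0&0&3&-3\\3&-3&0&0&0&0&-3&3\end{pmatrix}$, fusion coefficients $N_{\lambda\mu}^\nu=\sum_\rho S_{\lambda\rho}S_{\mu\rho}\overline{S_{\nu\rho}}/S_{0\rho}$. With linear forms $s_2=\chi_0+\chi_1+2\chi_2$, $s_3=\chi_0+\chi_1+2\chi_3$, $s_4=\chi_0+\chi_2+\chi_6$, $s_5=\chi_0+\chi_3+\chi_6$ (identified with their coefficient vectors $(a_\lambda)_{\lambda=0}^7$), $Z_{ij}=s_is_j^*$ is the matrix $(a^{(i)}_\lambda a^{(j)}_\mu)_{\lambda,\mu}$. A nimrep of dimension $n$: non-negative integer $n\times n$ matrices $G_\lambda$ with $G_0=I$, $G_{\bar\lambda}=G_\lambda^t$, $G_\lambda G_\mu=\sum_\nu N_{\lambda\mu}^\nu G_\nu$; two nimreps $G',G''$ are equivalent if $PG'_\lambda P^{-1}=G''_\lambda$ for all $\lambda$ for some permutation matrix $P$. $\mathrm{Exp}(Z)$ is the multiset with $Z_{\mu\mu}$ copies of $\mu$. A nimrep matches $Z$ if $n=\mathrm{Tr}\,Z$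 and the $G_\lambda$ are simultaneously unitarily diagonalisable with joint eigenvalues $(S_{\lambda\mu}/S_{0\mu})_\lambda$, $\mu$ running through $\mathrm{Exp}(Z)$ with multiplicity. *)

theory Defs
  imports Complex_Main "HOL-Combinatorics.Permutations"
begin

text \<open>Modular data of the quantum double of S3. Primaries are 0..7 (as naturals < 8).\<close>

definition Smat_int :: "int list list" where
  "Smat_int =
    [[1,1,2,2,2,2,3,3],
     [1,1,2,2,2,2,-3,-3],
     [2,2,4,-2,-2,-2,0,0],
     [2,2,-2,4,-2,-2,0,0],
     [2,2,-2,-2,-2,4,0,0],
     [2,2,-2,-2,4,-2,0,0],
     [3,-3,0,0,0,0,3,-3],
     [3,-3,0,0,0,0,-3,3]]"

definition S :: "nat \<Rightarrow> nat \<Rightarrow> complex" where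
  "S l m = of_int (Smat_int ! l ! m) / 6"

definition dual :: "nat \<Rightarrow> nat" where
  "dual l = l"

definition Nfus :: "nat \<Rightarrow> nat \<Rightarrow> nat \<Rightarrow> complex" where
  "Nfus l m n = (\<Sum>r<8. S l r * S m r * cnj (S n r) / S 0 r)"

text \<open>Coefficient vectors of the linear forms s_2, s_3, s_4, s_5.\<close>
definition svec :: "nat \<Rightarrow> nat \<Rightarrow> nat" where
  "svec i l =
    (if i = 2 then [1,1,2,0,0,0,0,0] ! l
     else if i = 3 then [1,1,0,2,0,0,0,0] ! l
     else if i = 4 then [1,0,1,0,0,0,1,0] ! l
     else if i = 5 then [1,0,0,1,0,0,1,0] ! l
     else 0)"

definition Zmat :: "nat \<Rightarrow> nat \<Rightarrow> nat \<Rightarrow> nat \<Rightarrow> nat" where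
  "Zmat i j l m = svec i l * svec j m"

definition trZ :: "nat \<Rightarrow> nat \<Rightarrow> nat" where
  "trZ i j = (\<Sum>l<8. Zmat i j l l)"

text \<open>A nimrep of dimension n: G l is the n x n non-negative integer matrix
  (entries G l a b for a, b < n).\<close>
definition is_nimrep :: "nat \<Rightarrow> (nat \<Rightarrow> nat \<Rightarrow> nat \<Rightarrow> nat) \<Rightarrow> bool" where
  "is_nimrep n G \<longleftrightarrow>
     (\<forall>a<n. \<forall>b<n. G 0 a b = (if a = b then 1 else 0)) \<and>
     (\<forall>l<8. \<forall>a<n. \<forall>b<n. G (dual l) a b = G l b a) \<and>
     (\<forall>l<8. \<forall>m<8. \<forall>a<n. \<forall>b<n.
        of_nat (\<Sum>k<n. G l a k * G m k b) = (\<Sum>v<8. Nfus l m v * of_nat (G v a b)))"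

text \<open>Equivalence: P G1_l P^{-1} = G2_l for the permutation matrix P of sigma.\<close>
definition nimrep_equiv :: "nat \<Rightarrow> (nat \<Rightarrow> nat \<Rightarrow> nat \<Rightarrow> nat) \<Rightarrow> (nat \<Rightarrow> nat \<Rightarrow> nat \<Rightarrow> nat) \<Rightarrow> bool" where
  "nimrep_equiv n G1 G2 \<longleftrightarrow>
     (\<exists>\<sigma>. (\<sigma> permutes {..<n}) \<and>
        (\<forall>l<8. \<forall>a<n. \<forall>b<n. G2 l (\<sigma> a) (\<sigma> b) = G1 l a b))"

definition unitary_mat :: "nat \<Rightarrow> (nat \<Rightarrow> nat \<Rightarrow> complex) \<Rightarrow> bool" where
  "unitary_mat n U \<longleftrightarrow>
     (\<forall>a<n. \<forall>b<n. (\<Sum>k<n. cnj (U k a) * U k b) = (if a = b then 1 else 0))"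

text \<open>Nimrep matches Z_{ij}: dimension Tr Z and the G_l are simultaneously unitarily
  diagonalisable, the k-th common eigenvector having eigenvalues S_{l,e k}/S_{0,e k},
  where e enumerates Exp(Z) with multiplicities.\<close>
definition matches :: "nat \<Rightarrow> nat \<Rightarrow> nat \<Rightarrow> (nat \<Rightarrow> nat \<Rightarrow> nat \<Rightarrow> nat) \<Rightarrow> bool" where
  "matches i j n G \<longleftrightarrow> n = trZ i j \<and>
     (\<exists>U e. unitary_mat n U \<and> (\<forall>k<n. e k < (8::nat)) \<and>
        (\<forall>m<8. card {k. k < n \<and> e k = m} = Zmat i j m m) \<and>
        (\<forall>l<8. \<forall>a<n. \<forall>b<n.
           (\<Sum>k<n. \<Sum>k'<n. cnj (U k a) * of_nat (G l k k') * U k' b)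
             = (if a = b then S l (e a) / S 0 (e a) else 0)))"

end

theory Submission
  imports Defs
begin

text \<open>Each of the four invariants has Z 0 0 = 1 as its only non-zero diagonal entry, so a matching
  nimrep is one-dimensional with joint eigenvalues S l 0 / S 0 0, the quantum dimensions. This fixes
  the single entry of every G l, which gives uniqueness; conversely the quantum dimensions form a
  nimrep because, by the Verlinde formula and unitarity of S, they respect the fusion rules.\<close>

lemma less_8_cases:
  assumes "(m::nat) < 8"
  obtains "m = 0" | "m = 1" | "m = 2" | "m = 3" | "m = 4" | "m = 5" | "m = 6" | "m = 7"
  using assms by fastforce

lemma S_unitary:
  assumes "r < 8" "s < 8"
  shows "(\<Sum>v<8. cnj (S v r) * S v s) = (if r = s then 1 else 0)"
  using assms
  by (elim less_8_cases)
     (simp_all add: S_def Smat_int_def numeral_eq_Suc lessThan_Suc complex_eq_iff)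

lemma Nfus_eigenvalue:
  assumes "s < 8"
  shows "(\<Sum>v<8. Nfus l m v * S v s) = S l s * S m s / S 0 s"
proof -
  have "(\<Sum>v<8. Nfus l m v * S v s)
      = (\<Sum>r<8. S l r * S m r / S 0 r * (\<Sum>v<8. cnj (S v r) * S v s))"
    unfolding Nfus_def sum_distrib_right sum_distrib_left
    by (subst sum.swap) (simp add: algebra_simps)
  also have "\<dots> = (\<Sum>r<8. if r = s then S l r * S m r / S 0 r else 0)"
    using S_unitary assms by (intro sum.cong) auto
  finally show ?thesis
    using assms by simp
qed

definition qdim :: "nat \<Rightarrow> nat" where
  "qdim l = [1,1,2,2,2,2,3,3] ! l"

lemma of_nat_qdim: "l < 8 \<Longrightarrow> of_nat (qdim l) = S l 0 / S 0 0"
  by (elim less_8_cases) (simp_all add: qdim_def S_def Smat_int_def)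

lemma Nfus_qdim:
  assumes "l < 8" "m < 8"
  shows "(\<Sum>v<8. Nfus l m v * of_nat (qdim v)) = of_nat (qdim l) * of_nat (qdim m)"
proof -
  have "(\<Sum>v<8. Nfus l m v * of_nat (qdim v)) = (\<Sum>v<8. Nfus l m v * S v 0) / S 0 0"
    by (simp add: of_nat_qdim sum_divide_distrib)
  also have "\<dots> = of_nat (qdim l) * of_nat (qdim m)"
    using assms by (simp add: Nfus_eigenvalue of_nat_qdim)
  finally show ?thesis .
qed

lemma is_nimrep_qdim: "is_nimrep 1 (\<lambda>l a b. qdim l)"
  unfolding is_nimrep_def dual_def by (simp add: Nfus_qdim) (simp add: qdim_def)

lemma Zmat_diag_vacuum:
  assumes "(i, j) \<in> {(2::nat, 5::nat), (5, 2), (3, 4), (4, 3)}" "m < 8"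
  shows "Zmat i j m m = (if m = 0 then 1 else 0)"
  using assms by (elim less_8_cases) (auto simp: Zmat_def svec_def)

lemma trZ_vacuum:
  assumes "\<And>m. m < 8 \<Longrightarrow> Zmat i j m m = (if m = 0 then 1 else 0)"
  shows "trZ i j = 1"
  unfolding trZ_def using assms by (simp add: sum.If_cases)

lemma matches_vacuumD:
  assumes vac: "\<And>m. m < 8 \<Longrightarrow> Zmat i j m m = (if m = 0 then 1 else 0)"
    and "matches i j n G"
  shows "n = 1" and "\<And>l. l < 8 \<Longrightarrow> G l 0 0 = qdim l"
proof -
  show n: "n = 1"
    using assms(2) trZ_vacuum[OF vac] by (simp add: matches_def)
  from assms(2) obtain U e where U: "unitary_mat 1 U"
    and ex: "\<forall>m<8. card {k::nat. k < 1 \<and> e k = m} = Zmat i j m m"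
    and eig: "\<forall>l<8. \<forall>a<1. \<forall>b<1.
                (\<Sum>k<1. \<Sum>k'<1. cnj (U k a) * of_nat (G l k k') * U k' b)
                  = (if a = b then S l (e a) / S 0 (e a) else 0)"
    unfolding matches_def n by (elim conjE exE) blast
  have "card {k::nat. k < 1 \<and> e k = 0} = 1"
    using ex vac[of 0] by simp
  then have e0: "e 0 = 0"
    by (metis (mono_tags) card.empty empty_Collect_eq less_one zero_neq_one)
  have conj_id: "cnj (U 0 0) * g * U 0 0 = g" for g
  proof -
    have "cnj (U 0 0) * g * U 0 0 = g * (cnj (U 0 0) * U 0 0)"
      by (simp add: mult_ac)
    with U show ?thesis
      by (simp add: unitary_mat_def)
  qed
  fix l :: nat
  assume "l < 8"
  then have "of_nat (G l 0 0) = (of_nat (qdim l) :: complex)"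
    using eig[rule_format, of l 0 0] e0 conj_id of_nat_qdim by simp
  then show "G l 0 0 = qdim l"
    using of_nat_eq_iff by blast
qed

lemma matches_vacuum_qdim:
  assumes vac: "\<And>m. m < 8 \<Longrightarrow> Zmat i j m m = (if m = 0 then 1 else 0)"
  shows "matches i j 1 (\<lambda>l a b. qdim l)"
  unfolding matches_def
proof (intro conjI exI[of _ "\<lambda>_ _. 1"] exI[of _ "\<lambda>_. 0"] allI impI)
  show "unitary_mat 1 (\<lambda>_ _. 1)"
    by (simp add: unitary_mat_def)
  fix m :: nat
  assume "m < 8"
  then show "card {k::nat. k < 1 \<and> 0 = m} = Zmat i j m m"
    using vac by (cases "m = 0") auto
next
  fix l a b :: nat
  assume "l < 8" "a < 1" "b < 1"
  then show "(\<Sum>k<(1::nat). \<Sum>k'<(1::nat). cnj 1 * of_nat (qdim l) * 1)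
             = (if a = b then S l 0 / S 0 0 else 0)"
    by (simp add: of_nat_qdim)
qed (simp_all add: trZ_vacuum[OF vac])

lemma nimrep_equiv_dim1:
  assumes "\<And>l. l < 8 \<Longrightarrow> G1 l 0 0 = G2 l 0 0"
  shows "nimrep_equiv 1 G1 G2"
  unfolding nimrep_equiv_def using assms by (intro exI[of _ id]) (auto intro: permutes_id)

theorem proposition6p3:
  assumes "(i, j) \<in> {(2::nat, 5::nat), (5, 2), (3, 4), (4, 3)}"
  shows "(\<exists>n G. is_nimrep n G \<and> matches i j n G) \<and>
         (\<forall>n G1 G2. is_nimrep n G1 \<and> matches i j n G1 \<and>
                    is_nimrep n G2 \<and> matches i j n G2 \<longrightarrow> nimrep_equiv n G1 G2)"
proof -
  note vac = Zmat_diag_vacuum[OF assms]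
  have "is_nimrep 1 (\<lambda>l a b. qdim l) \<and> matches i j 1 (\<lambda>l a b. qdim l)"
    using is_nimrep_qdim matches_vacuum_qdim[OF vac] by blast
  moreover have "nimrep_equiv n G1 G2" if "matches i j n G1" "matches i j n G2" for n G1 G2
    using matches_vacuumD[OF vac that(1)] matches_vacuumD[OF vac that(2)] nimrep_equiv_dim1
    by simp
  ultimately show ?thesis
    by blast
qed

end
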